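(* Every spline $s\in\mathcal Z_{kl}^{\Delta\lambda,\Delta\mu}(\Omega)$ has a unique representation $$s(x,y)=\sum_{i=-k}^{g-1}\sum_{j=-l}^{h-1}z_{ij}\,Z_{ij}^{k+1,l+1}(x,y)+\sum_{i=-k}^{g-1}v_i\,Z_i^{k+1}(x,y)+\sum_{j=-l}^{h-1}u_j\,Z_j^{l+1}(x,y)$$ with real coefficients $z_{ij},v_i,u_j$.
   Context: Let $\Omega=[a,b]\times[c,d]\subset\mathbb R^2$ with $a<b$, $c<d$. Fix integers $g,h\ge 0$ and degrees $k,l\in\mathbb N_0$. Take knots $a=\lambda_0<\lambda_1<\dots<\lambda_g<\lambda_{g+1}=b$ and $c=\mu_0<\mu_1<\dots<\mu_h<\mu_{h+1}=d$, extended by coincident boundary knots $\lambda_{-k}=\dots=\lambda_0=a$, $\lambda_{g+1}=\dots=\lambda_{g+k+1}=b$, and $\mu_{-l}=\dots=\mu_0=c$, $\mu_{h+1}=\dots=\mu_{h+l+1}=d$. For $i=-k,\dots,g$ let $B_i^{k+1}(x)$ denote the (normalized) B-spline of degree $k$ with knots $\lambda_i,\dots,\lambda_{i+k+1}$, so that $\sum_{i=-k}^g B_i^{k+1}(x)=1$ on $[a,b]$; similarly $B_j^{l+1}(y)$, $j=-l,\dots,h$, is the B-spline of degree $l$ with knots $\mu_j,\dots,\mu_{j+l+1}$. Let $\mathcal S_{kl}^{\Delta\lambda,\Delta\mu}(\Omega)$ be the span of the functions $B_i^{k+1}(x)B_j^{l+1}(y)$, and $\mathcal Z_{kl}^{\Delta\lambda,\Delta\mu}(\Omega)=\{s\in\mathcal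 S_{kl}^{\Delta\lambda,\Delta\mu}(\Omega):\iint_\Omega s\,dx\,dy=0\}$. The univariate ZB-splines are, for $i=-k,\dots,g-1$, $$Z_i^{k+1}(x)=(k+1)\Big(\frac{B_i^{k+1}(x)}{\lambda_{i+k+1}-\lambda_i}-\frac{B_{i+1}^{k+1}(x)}{\lambda_{i+k+2}-\lambda_{i+1}}\Big),$$ and analogously $Z_j^{l+1}(y)=(l+1)\big(\frac{B_j^{l+1}(y)}{\mu_{j+l+1}-\mu_j}-\frac{B_{j+1}^{l+1}(y)}{\mu_{j+l+2}-\mu_{j+1}}\big)$ for $j=-l,\dots,h-1$. The bivariate ZB-splines are $Z_{ij}^{k+1,l+1}(x,y)=Z_i^{k+1}(x)Z_j^{l+1}(y)$, $Z_i^{k+1}(x,y)=Z_i^{k+1}(x)$ and $Z_j^{l+1}(x,y)=Z_j^{l+1}(y)$. *)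

theory Defs
  imports "HOL-Analysis.Analysis" "HOL-Library.FuncSet"
begin

text \<open>Extended knot sequence: lam (-k) = ... = lam 0 = a < lam 1 < ... < lam g < lam (g+1) = ... = lam (g+k+1) = b.
  Knots are indexed by integers; values outside -k..g+k+1 are irrelevant.\<close>
definition knot_seq :: "real \<Rightarrow> real \<Rightarrow> nat \<Rightarrow> nat \<Rightarrow> (int \<Rightarrow> real) \<Rightarrow> bool" where
  "knot_seq a b g k lam \<longleftrightarrow> a < b \<and>
     (\<forall>i\<in>{- int k..0}. lam i = a) \<and>
     (\<forall>i\<in>{int g + 1..int g + int k + 1}. lam i = b) \<and>
     (\<forall>i\<in>{0..int g}. lam i < lam (i + 1))"

text \<open>Normalized B-spline of degree p with knots lam i, ..., lam (i+p+1), via the Cox--de Boor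
  recursion (with the convention 0/0 = 0, which is Isabelle's x/0 = 0).  The degree-0 splines are
  indicators of half-open intervals, the last nondegenerate one closed at the right end b, so that
  the B-splines sum to 1 on the whole closed interval [a,b].\<close>
fun bspline :: "(int \<Rightarrow> real) \<Rightarrow> real \<Rightarrow> nat \<Rightarrow> int \<Rightarrow> real \<Rightarrow> real" where
  "bspline lam b 0 i x =
     (if lam i \<le> x \<and> (x < lam (i + 1) \<or> (x = b \<and> lam (i + 1) = b \<and> lam i < lam (i + 1)))
      then 1 else 0)"
| "bspline lam b (Suc p) i x =
     (x - lam i) / (lam (i + int p + 1) - lam i) * bspline lam b p i x
     + (lam (i + int p + 2) - x) / (lam (i + int p + 2) - lam (i + 1)) * bspline lam b p (i + 1) x"

definition zbspline :: "(int \<Rightarrow> real) \<Rightarrow> real \<Rightarrow> nat \<Rightarrow> int \<Rightarrow> real \<Rightarrow> real" where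
  "zbspline lam b k i x = real (k + 1) *
     (bspline lam b k i x / (lam (i + int k + 1) - lam i)
      - bspline lam b k (i + 1) x / (lam (i + int k + 2) - lam (i + 1)))"

definition spline_space ::
  "real \<Rightarrow> real \<Rightarrow> real \<Rightarrow> real \<Rightarrow> nat \<Rightarrow> nat \<Rightarrow> nat \<Rightarrow> nat \<Rightarrow> (int \<Rightarrow> real) \<Rightarrow> (int \<Rightarrow> real)
     \<Rightarrow> (real \<Rightarrow> real \<Rightarrow> real) set" where
  "spline_space a b c d g h k l lam mu =
     {s. \<exists>coef :: int \<Rightarrow> int \<Rightarrow> real. \<forall>x\<in>{a..b}. \<forall>y\<in>{c..d}.
         s x y = (\<Sum>i\<in>{- int k..int g}. \<Sum>j\<in>{- int l..int h}.
                    coef i j * bspline lam b k i x * bspline mu d l j y)}"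

definition zspline_space ::
  "real \<Rightarrow> real \<Rightarrow> real \<Rightarrow> real \<Rightarrow> nat \<Rightarrow> nat \<Rightarrow> nat \<Rightarrow> nat \<Rightarrow> (int \<Rightarrow> real) \<Rightarrow> (int \<Rightarrow> real)
     \<Rightarrow> (real \<Rightarrow> real \<Rightarrow> real) set" where
  "zspline_space a b c d g h k l lam mu =
     {s \<in> spline_space a b c d g h k l lam mu.
        integral (cbox (a, c) (b, d)) (\<lambda>(x, y). s x y) = 0}"

end

theory Submission
  imports Defs
begin

text \<open>Z_i^{k+1} is the derivative of B_i^{k+2}, which vanishes at both ends of [a, b], so every
  ZB-spline has integral zero. Writing Z_j = M_j - M_{j+1} with the M-splines M_j, positive
  multiples of the B_j, the partition of unity shows that the constants and the Z_j span the
  univariate spline space; linear independence of the B-splines (read off from their orders of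
  vanishing at a and their values inside the knot intervals) makes them a basis. Taking tensor
  products, every bivariate spline is a constant plus a bivariate ZB-expansion, and integrating
  over \<Omega> identifies the constant with the mean of s, which is zero. Uniqueness follows by
  applying the univariate independence first in x and then in y.\<close>

lemma sum_int_Icc_last:
  "m \<le> n + 1 \<Longrightarrow> (\<Sum>i\<in>{m..n + 1::int}. f i) = (\<Sum>i\<in>{m..n}. f i) + f (n + 1)"
proof -
  assume "m \<le> n + 1"
  then have "{m..n + 1} = insert (n + 1) {m..n}" by auto
  then show ?thesis by (simp add: add.commute)
qed

lemma sum_int_Icc_first:
  "m \<le> n \<Longrightarrow> (\<Sum>i\<in>{m..n::int}. f i) = f m + (\<Sum>i\<in>{m + 1..n}. f i)"
proof -
  assume "m \<le> n"
  then have "{m..n} = insert m {m + 1..n}" by auto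
  then show ?thesis by simp
qed

lemma sum_int_Icc_shift: "(\<Sum>i\<in>{m..n::int}. f (i + 1)) = (\<Sum>i\<in>{m + 1..n + 1}. f i)"
  by (rule sum.reindex_bij_witness[of _ "\<lambda>i. i - 1" "\<lambda>i. i + 1"]) auto

lemma sum_int_Icc_telescope:
  assumes "m \<le> n + 1"
  shows "(\<Sum>j\<in>{m..n::int}. f j - f (j + 1)) = f m - (f (n + 1) :: real)"
proof -
  have "m - 1 \<le> n" using assms by simp
  then show ?thesis
  proof (induction n rule: int_ge_induct)
    case (step n)
    then show ?case by (simp add: sum_int_Icc_last)
  qed simp
qed

lemma has_integral_tensor_product:
  fixes f g :: "real \<Rightarrow> real"
  assumes [measurable]: "f \<in> borel_measurable borel" "g \<in> borel_measurable borel"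
    and fb: "\<forall>x\<in>{a..b}. \<bar>f x\<bar> \<le> Mf" and gb: "\<forall>y\<in>{c..d}. \<bar>g y\<bar> \<le> Mg"
    and fi: "(f has_integral I) {a..b}" and gi: "(g has_integral K) {c..d}"
  shows "((\<lambda>p. f (fst p) * g (snd p)) has_integral (I * K)) (cbox (a, c) (b, d))"
proof -
  define F where "F x = indicator {a..b} x * f x" for x :: real
  define G where "G y = indicator {c..d} y * g y" for y :: real
  have [measurable]: "F \<in> borel_measurable borel" unfolding F_def by measurable
  have [measurable]: "G \<in> borel_measurable borel" unfolding G_def by measurable
  have Fint: "integrable lborel F" unfolding F_def
    using integrableI_bounded_set_indicator[of "{a..b}" lborel f Mf] fb
    by (simp add: emeasure_lborel_Icc_eq)
  have Gint: "integrable lborel G" unfolding G_def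
    using integrableI_bounded_set_indicator[of "{c..d}" lborel g Mg] gb
    by (simp add: emeasure_lborel_Icc_eq)
  have F_eq: "F = (\<lambda>x. if x \<in> {a..b} then f x else 0)" unfolding F_def by (auto simp: indicator_def)
  have G_eq: "G = (\<lambda>x. if x \<in> {c..d} then g x else 0)" unfolding G_def by (auto simp: indicator_def)
  have "(F has_integral I) UNIV" using fi unfolding F_eq has_integral_restrict_UNIV .
  then have IF: "integral\<^sup>L lborel F = I"
    using has_integral_integral_lborel[OF Fint] has_integral_unique by blast
  have "(G has_integral K) UNIV" using gi unfolding G_eq has_integral_restrict_UNIV .
  then have IG: "integral\<^sup>L lborel G = K"
    using has_integral_integral_lborel[OF Gint] has_integral_unique by blast
  define P where "P = (\<lambda>(x, y). F x * G y)"
  have [measurable]: "P \<in> borel_measurable (lborel \<Otimes>\<^sub>M lborel)" unfolding P_def by measurable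
  have Pint: "integrable (lborel \<Otimes>\<^sub>M lborel) P"
  proof (rule lborel_pair.Fubini_integrable)
    show "integrable lborel (\<lambda>x. \<integral>y. norm (P (x, y)) \<partial>lborel)"
      unfolding P_def by (simp add: abs_mult Gint Fint)
    show "AE x in lborel. integrable lborel (\<lambda>y. P (x, y))"
      unfolding P_def by (simp add: Gint)
  qed simp
  have "integral\<^sup>L (lborel \<Otimes>\<^sub>M lborel) P = (\<integral>x. (\<integral>y. P (x, y) \<partial>lborel) \<partial>lborel)"
    using lborel_pair.integral_fst'[OF Pint] by simp
  also have "\<dots> = I * K" unfolding P_def using IF IG by simp
  finally have PI: "integral\<^sup>L lborel P = I * K" by (simp add: lborel_prod)
  have Pint2: "integrable lborel P" using Pint by (simp add: lborel_prod)
  have "(P has_integral I * K) UNIV" using has_integral_integral_lborel[OF Pint2] PI by simp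
  moreover have "P = (\<lambda>p. if p \<in> cbox (a, c) (b, d) then f (fst p) * g (snd p) else 0)"
    unfolding P_def F_def G_def by (auto simp: indicator_def fun_eq_iff)
  ultimately have "((\<lambda>p. if p \<in> cbox (a, c) (b, d) then f (fst p) * g (snd p) else 0)
      has_integral I * K) UNIV"
    by simp
  then show ?thesis unfolding has_integral_restrict_UNIV .
qed

lemma sum_swap_outer:
  "(\<Sum>i\<in>I. \<Sum>j\<in>J. \<Sum>p\<in>P. h i j p) = (\<Sum>p\<in>P. \<Sum>i\<in>I. \<Sum>j\<in>J. h i j p)"
proof -
  have "(\<Sum>i\<in>I. \<Sum>j\<in>J. \<Sum>p\<in>P. h i j p) = (\<Sum>i\<in>I. \<Sum>p\<in>P. \<Sum>j\<in>J. h i j p)"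
    by (intro sum.cong refl sum.swap)
  also have "\<dots> = (\<Sum>p\<in>P. \<Sum>i\<in>I. \<Sum>j\<in>J. h i j p)"
    by (rule sum.swap)
  finally show ?thesis .
qed

lemma sum_tensor_expansion:
  fixes coef :: "'i \<Rightarrow> 'j \<Rightarrow> real"
  shows "(\<Sum>i\<in>I. \<Sum>j\<in>J. coef i j * ((A i + (\<Sum>p\<in>P. Bx i p * X p)) * (A' j + (\<Sum>q\<in>Q. By j q * Y q))))
   = (\<Sum>i\<in>I. \<Sum>j\<in>J. coef i j * A i * A' j)
     + (\<Sum>p\<in>P. (\<Sum>i\<in>I. \<Sum>j\<in>J. coef i j * A' j * Bx i p) * X p)
     + (\<Sum>q\<in>Q. (\<Sum>i\<in>I. \<Sum>j\<in>J. coef i j * A i * By j q) * Y q)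
     + (\<Sum>p\<in>P. \<Sum>q\<in>Q. (\<Sum>i\<in>I. \<Sum>j\<in>J. coef i j * Bx i p * By j q) * (X p * Y q))"
proof -
  have expand: "coef i j * ((A i + (\<Sum>p\<in>P. Bx i p * X p)) * (A' j + (\<Sum>q\<in>Q. By j q * Y q)))
    = coef i j * A i * A' j + (\<Sum>p\<in>P. coef i j * A' j * Bx i p * X p)
      + (\<Sum>q\<in>Q. coef i j * A i * By j q * Y q)
      + (\<Sum>p\<in>P. \<Sum>q\<in>Q. coef i j * Bx i p * By j q * (X p * Y q))" for i j
  proof -
    have "(\<Sum>p\<in>P. Bx i p * X p) * (\<Sum>q\<in>Q. By j q * Y q)
        = (\<Sum>p\<in>P. \<Sum>q\<in>Q. Bx i p * By j q * (X p * Y q))"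
      by (simp add: sum_product algebra_simps)
    then show ?thesis
      by (simp add: algebra_simps sum_distrib_left sum_distrib_right sum.distrib)
  qed
  have "(\<Sum>i\<in>I. \<Sum>j\<in>J. \<Sum>p\<in>P. coef i j * A' j * Bx i p * X p)
      = (\<Sum>p\<in>P. (\<Sum>i\<in>I. \<Sum>j\<in>J. coef i j * A' j * Bx i p) * X p)"
    "(\<Sum>i\<in>I. \<Sum>j\<in>J. \<Sum>q\<in>Q. coef i j * A i * By j q * Y q)
      = (\<Sum>q\<in>Q. (\<Sum>i\<in>I. \<Sum>j\<in>J. coef i j * A i * By j q) * Y q)"
    by (subst sum_swap_outer, simp add: sum_distrib_right)+
  moreover have "(\<Sum>i\<in>I. \<Sum>j\<in>J. \<Sum>p\<in>P. \<Sum>q\<in>Q. coef i j * Bx i p * By j q * (X p * Y q))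
      = (\<Sum>p\<in>P. \<Sum>q\<in>Q. (\<Sum>i\<in>I. \<Sum>j\<in>J. coef i j * Bx i p * By j q) * (X p * Y q))"
    by (subst sum_swap_outer, subst sum_swap_outer, simp add: sum_distrib_right)
  ultimately show ?thesis
    unfolding expand sum.distrib by simp
qed

locale extended_knots =
  fixes a b :: real and g k :: nat and lam :: "int \<Rightarrow> real"
  assumes knots: "knot_seq a b g k lam"
begin

abbreviation "lo \<equiv> - int k"
abbreviation "hi \<equiv> int g + int k + 1"
abbreviation "B \<equiv> bspline lam b"

lemma a_less_b: "a < b"
  using knots by (simp add: knot_seq_def)

lemma knot_left: "lo \<le> i \<Longrightarrow> i \<le> 0 \<Longrightarrow> lam i = a"
  using knots by (simp add: knot_seq_def)

lemma knot_right: "int g + 1 \<le> i \<Longrightarrow> i \<le> hi \<Longrightarrow> lam i = b"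
  using knots by (simp add: knot_seq_def)

lemma knot_strict_step: "0 \<le> i \<Longrightarrow> i \<le> int g \<Longrightarrow> lam i < lam (i + 1)"
  using knots by (simp add: knot_seq_def)

lemma knot_mono_step: "lo \<le> i \<Longrightarrow> i + 1 \<le> hi \<Longrightarrow> lam i \<le> lam (i + 1)"
  using knot_left[of i] knot_left[of "i + 1"] knot_strict_step[of i] knot_right[of i] knot_right[of "i + 1"]
  by (cases "i < 0"; cases "i \<le> int g") auto

lemma knot_mono:
  assumes "lo \<le> i" "i \<le> j" "j \<le> hi"
  shows "lam i \<le> lam j"
  using assms(2,3)
proof (induction j rule: int_ge_induct)
  case (step j)
  then have "lam i \<le> lam j" by simp
  also have "\<dots> \<le> lam (j + 1)" using assms(1) step by (intro knot_mono_step) auto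
  finally show ?case .
qed simp

lemma knot_strict:
  assumes "0 \<le> i" "i < j" "j \<le> int g + 1"
  shows "lam i < lam j"
proof -
  have "i + 1 \<le> j" using assms(2) by simp
  then show ?thesis using assms(3)
  proof (induction j rule: int_ge_induct)
    case base then show ?case using assms by (intro knot_strict_step) auto
  next
    case (step j)
    then have "lam i < lam j" by simp
    also have "\<dots> < lam (j + 1)" using assms(1) step by (intro knot_strict_step) auto
    finally show ?case .
  qed
qed

lemma knot_in_interval: "lo \<le> i \<Longrightarrow> i \<le> hi \<Longrightarrow> a \<le> lam i \<and> lam i \<le> b"
  using knot_mono[of lo i] knot_mono[of i hi] knot_left[of lo] knot_right[of hi] by simp

lemma knot_gt_a: "1 \<le> j \<Longrightarrow> j \<le> hi \<Longrightarrow> a < lam j"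
  using knot_left[of 0] knot_strict_step[of 0] knot_mono[of 1 j] by simp

lemma support_length_pos: "lo \<le> i \<Longrightarrow> i \<le> int g \<Longrightarrow> lam i < lam (i + int k + 1)"
proof -
  assume i: "lo \<le> i" "i \<le> int g"
  have "lam i \<le> lam (max i 0)" using i by (intro knot_mono) auto
  also have "\<dots> < lam (min (i + int k + 1) (int g + 1))" using i by (intro knot_strict) auto
  also have "\<dots> \<le> lam (i + int k + 1)" using i by (intro knot_mono) auto
  finally show ?thesis .
qed

lemma equal_knots_at_ends: "lo \<le> j \<Longrightarrow> j + 1 \<le> hi \<Longrightarrow> lam j = lam (j + 1) \<Longrightarrow> lam j = a \<or> lam j = b"
  using knot_left[of j] knot_strict_step[of j] knot_right[of j]
  by (cases "j < 0"; cases "j \<le> int g") auto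

end

section \<open>Support, positivity and partition of unity\<close>

context extended_knots
begin

lemma bspline_zero_left:
  "lo \<le> i \<Longrightarrow> i + int p + 1 \<le> hi \<Longrightarrow> x < lam i \<Longrightarrow> B p i x = 0"
proof (induction p arbitrary: i)
  case (Suc p)
  have "B p (i + 1) x = 0"
    using Suc.prems knot_mono_step[of i] by (intro Suc.IH) auto
  with Suc show ?case by simp
qed simp

lemma bspline_zero_right:
  "lo \<le> i \<Longrightarrow> i + int p + 1 \<le> hi \<Longrightarrow>
    lam (i + int p + 1) < x \<or> (lam (i + int p + 1) \<le> x \<and> x \<noteq> b) \<Longrightarrow> B p i x = 0"
proof (induction p arbitrary: i)
  case (Suc p)
  have "lam (i + int p + 1) \<le> lam (i + int p + 2)"
    using Suc.prems by (intro knot_mono) auto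
  then have "B p i x = 0" "B p (i + 1) x = 0"
    using Suc.prems by (auto intro!: Suc.IH simp: add_ac)
  then show ?case by simp
qed auto

lemma bspline_degenerate:
  "lo \<le> i \<Longrightarrow> i + int p + 1 \<le> hi \<Longrightarrow> lam i = lam (i + int p + 1) \<Longrightarrow> B p i x = 0"
proof (induction p arbitrary: i)
  case (Suc p)
  have j: "i + int (Suc p) + 1 = i + int p + 2" "i + 1 + int p + 1 = i + int p + 2" by simp_all
  have i: "lo \<le> i" "i + int p + 2 \<le> hi" and eq: "lam i = lam (i + int p + 2)"
    using Suc.prems unfolding j by auto
  have "lam i \<le> lam (i + int p + 1)" "lam (i + int p + 1) \<le> lam (i + int p + 2)"
    "lam i \<le> lam (i + 1)" "lam (i + 1) \<le> lam (i + int p + 2)"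
    using i by (auto intro!: knot_mono)
  then have "B p i x = 0" "B p (i + 1) x = 0"
    using i eq by (auto intro!: Suc.IH simp only: j)
  then show ?case by simp
qed auto

lemma bspline_left_term_nonneg:
  assumes "lo \<le> i" "i + int p + 1 \<le> hi" "0 \<le> B p i x"
  shows "0 \<le> (x - lam i) / (lam (i + int p + 1) - lam i) * B p i x"
proof (cases "x < lam i")
  case False
  moreover have "lam i \<le> lam (i + int p + 1)" using assms by (intro knot_mono) auto
  ultimately show ?thesis using assms by (intro mult_nonneg_nonneg divide_nonneg_nonneg) auto
qed (use assms bspline_zero_left[of i p x] in simp)

lemma bspline_right_term_nonneg:
  assumes "lo \<le> i" "i + int p + 2 \<le> hi" "0 \<le> B p (i + 1) x"
  shows "0 \<le> (lam (i + int p + 2) - x) / (lam (i + int p + 2) - lam (i + 1)) * B p (i + 1) x"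
proof (cases "lam (i + int p + 2) < x")
  case True
  have e: "i + 1 + int p + 1 = i + int p + 2" by simp
  have "B p (i + 1) x = 0"
    by (rule bspline_zero_right, unfold e) (use assms True in auto)
  then show ?thesis by simp
next
  case False
  moreover have "lam (i + 1) \<le> lam (i + int p + 2)" using assms by (intro knot_mono) auto
  ultimately show ?thesis using assms by (intro mult_nonneg_nonneg divide_nonneg_nonneg) auto
qed

lemma bspline_nonneg: "lo \<le> i \<Longrightarrow> i + int p + 1 \<le> hi \<Longrightarrow> 0 \<le> B p i x"
proof (induction p arbitrary: i)
  case (Suc p)
  then show ?case
    using bspline_left_term_nonneg[of i p x] bspline_right_term_nonneg[of i p x] by simp
qed simp

lemma bspline_pos:
  "lo \<le> i \<Longrightarrow> i + int p + 1 \<le> hi \<Longrightarrow> i \<le> j \<Longrightarrow> j \<le> i + int p \<Longrightarrow>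
    lam j < x \<Longrightarrow> x < lam (j + 1) \<Longrightarrow> 0 < B p i x"
proof (induction p arbitrary: i)
  case (Suc p)
  let ?l = "(x - lam i) / (lam (i + int p + 1) - lam i) * B p i x"
  let ?r = "(lam (i + int p + 2) - x) / (lam (i + int p + 2) - lam (i + 1)) * B p (i + 1) x"
  have "0 \<le> ?l" by (rule bspline_left_term_nonneg) (use Suc.prems bspline_nonneg in auto)
  moreover have "0 \<le> ?r" by (rule bspline_right_term_nonneg) (use Suc.prems bspline_nonneg in auto)
  moreover have "0 < ?l \<or> 0 < ?r"
  proof (cases "j \<le> i + int p")
    case True
    have "lam i \<le> lam j" "lam (j + 1) \<le> lam (i + int p + 1)"
      using Suc.prems True by (auto intro!: knot_mono)
    moreover have "0 < B p i x" using Suc.prems True by (intro Suc.IH) auto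
    ultimately show ?thesis using Suc.prems by simp
  next
    case False
    then have j: "j = i + int p + 1" using Suc.prems by simp
    have "lam (i + 1) \<le> lam j" using Suc.prems j by (auto intro!: knot_mono)
    moreover have "0 < B p (i + 1) x" using Suc.prems j by (intro Suc.IH) auto
    ultimately show ?thesis using Suc.prems j by (simp add: add_ac)
  qed
  ultimately show ?case by (auto simp del: divide_nonneg_nonneg)
qed auto

lemma sum_knot_indicators:
  "lo + int n \<le> hi \<Longrightarrow> (\<Sum>i\<in>{lo..<lo + int n}. if lam i \<le> x \<and> x < lam (i + 1) then 1 else 0)
    = (if lam lo \<le> x \<and> x < lam (lo + int n) then 1 else (0::real))"
proof (induction n)
  case (Suc n)
  have "{lo..<lo + int (Suc n)} = insert (lo + int n) {lo..<lo + int n}" by auto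
  moreover have "lam lo \<le> lam (lo + int n)" "lam (lo + int n) \<le> lam (lo + int n + 1)"
    using Suc.prems by (auto intro!: knot_mono)
  ultimately show ?case using Suc by (simp add: add_ac)
qed simp

lemma bspline_0_at_b: "lo \<le> i \<Longrightarrow> i + 1 \<le> hi \<Longrightarrow> B 0 i b = (if i = int g then 1 else 0)"
proof -
  assume i: "lo \<le> i" "i + 1 \<le> hi"
  have gap: "lam (int g) < lam (int g + 1)" "lam (int g + 1) = b"
    using knot_strict_step[of "int g"] knot_right[of "int g + 1"] by auto
  consider "i < int g" | "i = int g" | "int g < i" by linarith
  then show ?thesis
  proof cases
    case 1
    then have "lam (i + 1) \<le> lam (int g)" using i by (intro knot_mono) auto
    with 1 gap show ?thesis by auto
  next
    case 3
    then show ?thesis using i knot_right[of i] knot_right[of "i + 1"] by simp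
  qed (use gap in simp)
qed

lemma bspline_0_partition_of_unity:
  assumes "x \<in> {a..b}"
  shows "(\<Sum>i\<in>{lo..hi - 1}. B 0 i x) = 1"
proof (cases "x = b")
  case True
  then have "(\<Sum>i\<in>{lo..hi - 1}. B 0 i x) = (\<Sum>i\<in>{lo..hi - 1}. if i = int g then 1 else 0)"
    by (intro sum.cong) (auto simp: bspline_0_at_b simp del: bspline.simps)
  then show ?thesis by simp
next
  case False
  then have "(\<Sum>i\<in>{lo..hi - 1}. B 0 i x)
      = (\<Sum>i\<in>{lo..<lo + int (g + 2 * k + 1)}. if lam i \<le> x \<and> x < lam (i + 1) then 1 else 0)"
    using assms by (intro sum.cong) auto
  then show ?thesis
    using sum_knot_indicators[of "g + 2 * k + 1" x] False assms knot_left[of lo]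
      knot_right[of "lo + int (g + 2 * k + 1)"]
    by simp
qed

lemma bspline_partition_of_unity:
  assumes "p \<le> k" "x \<in> {a..b}"
  shows "(\<Sum>i\<in>{lo..hi - int p - 1}. B p i x) = 1"
  using assms(1)
proof (induction p)
  case 0
  show ?case using bspline_0_partition_of_unity[OF assms(2)] by simp
next
  case (Suc p)
  define N where "N = hi - int p - 2"
  define w where "w i = (x - lam i) / (lam (i + int p + 1) - lam i)" for i
  define v where "v i = (lam (i + int p + 1) - x) / (lam (i + int p + 1) - lam i)" for i
  have N: "lo \<le> N" using Suc.prems by (simp add: N_def)
  have "B p lo x = 0"
    by (rule bspline_degenerate) (use Suc.prems knot_left[of lo] knot_left[of "lo + int p + 1"] in auto)
  moreover have "B p (N + 1) x = 0"
    by (rule bspline_degenerate)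
      (use Suc.prems knot_right[of "N + 1"] knot_right[of "N + 1 + int p + 1"] in \<open>auto simp: N_def\<close>)
  ultimately have ends: "B p lo x = 0" "B p (N + 1) x = 0" by blast+
  have wv: "w i * B p i x + v i * B p i x = B p i x" if "lo \<le> i" "i \<le> N + 1" for i
  proof (cases "lam (i + int p + 1) = lam i")
    case True
    then have "B p i x = 0" using that by (intro bspline_degenerate) (auto simp: N_def)
    then show ?thesis by simp
  next
    case False
    then have "w i + v i = 1" unfolding w_def v_def by (simp add: divide_simps)
    then show ?thesis by (simp add: distrib_right[symmetric])
  qed
  have "(\<Sum>i\<in>{lo..N}. B (Suc p) i x)
      = (\<Sum>i\<in>{lo..N}. w i * B p i x) + (\<Sum>i\<in>{lo..N}. v (i + 1) * B p (i + 1) x)"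
    unfolding w_def v_def by (simp add: sum.distrib add_ac)
  also have "(\<Sum>i\<in>{lo..N}. v (i + 1) * B p (i + 1) x) = (\<Sum>i\<in>{lo + 1..N + 1}. v i * B p i x)"
    by (rule sum_int_Icc_shift)
  also have "\<dots> = (\<Sum>i\<in>{lo..N + 1}. v i * B p i x)"
    using N ends by (subst sum_int_Icc_first[of lo "N + 1"]) auto
  also have "(\<Sum>i\<in>{lo..N}. w i * B p i x) = (\<Sum>i\<in>{lo..N + 1}. w i * B p i x)"
    using N ends by (simp add: sum_int_Icc_last)
  also have "(\<Sum>i\<in>{lo..N + 1}. w i * B p i x) + (\<Sum>i\<in>{lo..N + 1}. v i * B p i x) = (\<Sum>i\<in>{lo..N + 1}. B p i x)"
    by (subst sum.distrib[symmetric]) (intro sum.cong; auto intro!: wv)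
  finally show ?case using Suc by (simp add: N_def)
qed

lemma bspline_le_1: "i \<in> {lo..int g} \<Longrightarrow> x \<in> {a..b} \<Longrightarrow> B k i x \<le> 1"
  using member_le_sum[of i "{lo..int g}" "\<lambda>j. B k j x"] bspline_nonneg[of _ k x]
    bspline_partition_of_unity[of k x]
  by simp

end

section \<open>Linear independence of B-splines\<close>

context extended_knots
begin

lemma eventually_near_a: "eventually (\<lambda>x. a < x \<and> x < lam 1) (at_right a)"
proof -
  have "a < lam 1" using knot_gt_a[of 1] by simp
  then show ?thesis using eventually_at_right_field by blast
qed

lemma left_term_limit_at_a:
  assumes i: "lo \<le> i" "i \<le> 0" "i + int p + 2 \<le> hi"
    and IH: "0 \<le> i + int p \<Longrightarrow> \<exists>L>0. ((\<lambda>x. B p i x / (x - a) ^ nat (i + int p)) \<longlongrightarrow> L) (at_right a)"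
  shows "\<exists>A\<ge>0. (0 \<le> i + int p \<longrightarrow> 0 < A) \<and>
    ((\<lambda>x. (x - lam i) / (lam (i + int p + 1) - lam i) * B p i x / (x - a) ^ nat (i + int p + 1))
      \<longlongrightarrow> A) (at_right a)"
proof (cases "0 \<le> i + int p")
  case True
  obtain L where L: "L > 0" "((\<lambda>x. B p i x / (x - a) ^ nat (i + int p)) \<longlongrightarrow> L) (at_right a)"
    using IH True by blast
  define D where "D = lam (i + int p + 1) - a"
  have D: "D > 0" unfolding D_def using knot_gt_a[of "i + int p + 1"] True i by simp
  have "eventually (\<lambda>x. B p i x / (x - a) ^ nat (i + int p) / D
      = (x - lam i) / (lam (i + int p + 1) - lam i) * B p i x / (x - a) ^ nat (i + int p + 1)) (at_right a)"
    using eventually_near_a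
  proof (rule eventually_mono)
    fix x assume "a < x \<and> x < lam 1"
    then have "x - a \<noteq> 0" by simp
    moreover have "nat (i + int p + 1) = Suc (nat (i + int p))" using True by simp
    moreover have "lam i = a" using i by (intro knot_left) auto
    moreover have "\<And>t P Bv. t \<noteq> 0 \<Longrightarrow> P \<noteq> 0 \<Longrightarrow> Bv / P / D = t / D * Bv / (t * P)"
      using D by (simp add: field_simps)
    ultimately show "B p i x / (x - a) ^ nat (i + int p) / D
      = (x - lam i) / (lam (i + int p + 1) - lam i) * B p i x / (x - a) ^ nat (i + int p + 1)"
      by (simp add: D_def)
  qed
  moreover have "((\<lambda>x. B p i x / (x - a) ^ nat (i + int p) / D) \<longlongrightarrow> L / D) (at_right a)"
    using L D by (intro tendsto_divide tendsto_const) auto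
  ultimately show ?thesis
    using L D True by (intro exI[of _ "L / D"]) (auto intro: Lim_transform_eventually)
next
  case False
  have "eventually (\<lambda>x. (x - lam i) / (lam (i + int p + 1) - lam i) * B p i x
      / (x - a) ^ nat (i + int p + 1) = 0) (at_right a)"
    using eventually_near_a
  proof (rule eventually_mono)
    fix x assume "a < x \<and> x < lam 1"
    moreover have "lam (i + int p + 1) = a" using False i by (intro knot_left) auto
    ultimately have "B p i x = 0" using i by (intro bspline_zero_right) auto
    then show "(x - lam i) / (lam (i + int p + 1) - lam i) * B p i x / (x - a) ^ nat (i + int p + 1) = 0"
      by simp
  qed
  then show ?thesis using False by (intro exI[of _ 0]) (auto intro: tendsto_eventually)
qed

lemma right_term_limit_at_a:
  assumes i: "lo \<le> i" "i \<le> 0" "0 \<le> i + int p + 1" "i + int p + 2 \<le> hi"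
    and IH: "i \<le> -1 \<Longrightarrow> \<exists>L>0. ((\<lambda>x. B p (i + 1) x / (x - a) ^ nat (i + 1 + int p)) \<longlongrightarrow> L) (at_right a)"
  shows "\<exists>A\<ge>0. (i \<le> -1 \<longrightarrow> 0 < A) \<and>
    ((\<lambda>x. (lam (i + int p + 2) - x) / (lam (i + int p + 2) - lam (i + 1)) * B p (i + 1) x
      / (x - a) ^ nat (i + int p + 1)) \<longlongrightarrow> A) (at_right a)"
proof (cases "i \<le> -1")
  case True
  obtain L where L: "L > 0" "((\<lambda>x. B p (i + 1) x / (x - a) ^ nat (i + 1 + int p)) \<longlongrightarrow> L) (at_right a)"
    using IH True by blast
  define c where "c = lam (i + int p + 2)"
  have c: "a < c" unfolding c_def using knot_gt_a[of "i + int p + 2"] i by simp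
  have "lam (i + 1) = a" using True i by (intro knot_left) auto
  then have "(\<lambda>x. (c - x) / (c - a) * (B p (i + 1) x / (x - a) ^ nat (i + 1 + int p)))
      = (\<lambda>x. (lam (i + int p + 2) - x) / (lam (i + int p + 2) - lam (i + 1)) * B p (i + 1) x
          / (x - a) ^ nat (i + int p + 1))"
    by (simp add: c_def add_ac)
  moreover have "((\<lambda>x. (c - x) / (c - a) * (B p (i + 1) x / (x - a) ^ nat (i + 1 + int p)))
      \<longlongrightarrow> (c - a) / (c - a) * L) (at_right a)"
    by (intro tendsto_mult L tendsto_divide tendsto_diff tendsto_const tendsto_ident_at) (use c in simp)
  ultimately show ?thesis using L c True by (intro exI[of _ L]) auto
next
  case False
  have "eventually (\<lambda>x. (lam (i + int p + 2) - x) / (lam (i + int p + 2) - lam (i + 1)) * B p (i + 1) x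
      / (x - a) ^ nat (i + int p + 1) = 0) (at_right a)"
    using eventually_near_a
  proof (rule eventually_mono)
    fix x assume "a < x \<and> x < lam 1"
    moreover have "i = 0" using False i by simp
    ultimately have "B p (i + 1) x = 0" using i by (intro bspline_zero_left) auto
    then show "(lam (i + int p + 2) - x) / (lam (i + int p + 2) - lam (i + 1)) * B p (i + 1) x
      / (x - a) ^ nat (i + int p + 1) = 0" by simp
  qed
  then show ?thesis using False by (intro exI[of _ 0]) (auto intro: tendsto_eventually)
qed

text \<open>The B-splines B_i with i \<le> 0 all start at a, but vanish there to the different orders i + p,
  which separates them.\<close>

lemma bspline_order_at_a:
  "lo \<le> i \<Longrightarrow> i \<le> 0 \<Longrightarrow> 0 \<le> i + int p \<Longrightarrow> p \<le> k \<Longrightarrow>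
    \<exists>L>0. ((\<lambda>x. B p i x / (x - a) ^ nat (i + int p)) \<longlongrightarrow> L) (at_right a)"
proof (induction p arbitrary: i)
  case 0
  then have "i = 0" by simp
  have "eventually (\<lambda>x. B 0 i x / (x - a) ^ nat (i + int 0) = 1) (at_right a)"
    using eventually_near_a by (rule eventually_mono) (use \<open>i = 0\<close> knot_left[of 0] in simp)
  then show ?case by (intro exI[of _ 1]) (auto intro: tendsto_eventually)
next
  case (Suc p)
  have i: "lo \<le> i" "i \<le> 0" "i + int p + 2 \<le> hi" using Suc.prems by auto
  have ip: "0 \<le> i + int p + 1" using Suc.prems by simp
  obtain A1 where A1: "A1 \<ge> 0" "0 \<le> i + int p \<longrightarrow> 0 < A1"
    "((\<lambda>x. (x - lam i) / (lam (i + int p + 1) - lam i) * B p i x / (x - a) ^ nat (i + int p + 1))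
      \<longlongrightarrow> A1) (at_right a)"
    using left_term_limit_at_a[OF i] Suc by auto
  obtain A2 where A2: "A2 \<ge> 0" "i \<le> -1 \<longrightarrow> 0 < A2"
    "((\<lambda>x. (lam (i + int p + 2) - x) / (lam (i + int p + 2) - lam (i + 1)) * B p (i + 1) x
      / (x - a) ^ nat (i + int p + 1)) \<longlongrightarrow> A2) (at_right a)"
    using right_term_limit_at_a[OF i(1,2) ip i(3)] Suc by auto
  have "((\<lambda>x. B (Suc p) i x / (x - a) ^ nat (i + int (Suc p))) \<longlongrightarrow> A1 + A2) (at_right a)"
    using tendsto_add[OF A1(3) A2(3)] by (simp add: add_divide_distrib add_ac)
  moreover have "0 < A1 + A2" using A1 A2 by (cases "0 \<le> i + int p") auto
  ultimately show ?case by blast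
qed

lemma sum_bspline_near_a:
  assumes i: "lo \<le> i" "i \<le> 0" and x: "x < lam 1" and prev: "\<And>j. lo \<le> j \<Longrightarrow> j < i \<Longrightarrow> c j = 0"
  shows "(\<Sum>j\<in>{lo..int g}. c j * B k j x) = (\<Sum>j\<in>{i..0}. c j * B k j x)"
proof (rule sum.mono_neutral_right)
  show "\<forall>j\<in>{lo..int g} - {i..0}. c j * B k j x = 0"
  proof
    fix j assume j: "j \<in> {lo..int g} - {i..0}"
    show "c j * B k j x = 0"
    proof (cases "j < i")
      case False
      then have "lam 1 \<le> lam j" using j by (intro knot_mono) auto
      then have "B k j x = 0" using x j by (intro bspline_zero_left) auto
      then show ?thesis by simp
    qed (use prev j in simp)
  qed
qed (use i in auto)

lemma bspline_coeff_zero_at_a: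
  assumes S: "\<forall>x\<in>{a..b}. (\<Sum>j\<in>{lo..int g}. c j * B k j x) = 0"
    and i: "lo \<le> i" "i \<le> 0" and prev: "\<And>j. lo \<le> j \<Longrightarrow> j < i \<Longrightarrow> c j = 0"
  shows "c i = 0"
proof -
  have "\<forall>j\<in>{i..0}. \<exists>L>0. ((\<lambda>x. B k j x / (x - a) ^ nat (j + int k)) \<longlongrightarrow> L) (at_right a)"
    using i by (auto intro!: bspline_order_at_a)
  then obtain L where L: "\<And>j. j \<in> {i..0} \<Longrightarrow> L j > 0 \<and> ((\<lambda>x. B k j x / (x - a) ^ nat (j + int k)) \<longlongrightarrow> L j) (at_right a)"
    by metis
  define F where "F x = (\<Sum>j\<in>{i..0}. c j * (B k j x / (x - a) ^ nat (j + int k)) * (x - a) ^ nat (j - i))" for x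
  have "(F \<longlongrightarrow> (\<Sum>j\<in>{i..0}. c j * L j * (a - a) ^ nat (j - i))) (at_right a)"
    unfolding F_def using L
    by (intro tendsto_sum tendsto_mult tendsto_const tendsto_power tendsto_diff tendsto_ident_at) auto
  moreover have "(\<Sum>j\<in>{i..0}. c j * L j * (a - a) ^ nat (j - i))
      = (\<Sum>j\<in>{i..0}. if j = i then c i * L i else 0)"
    by (intro sum.cong) auto
  moreover have "\<dots> = c i * L i" using i(2) by (subst sum.delta) auto
  ultimately have lim: "(F \<longlongrightarrow> c i * L i) (at_right a)" by simp
  have "eventually (\<lambda>x. F x = 0) (at_right a)"
    using eventually_near_a
  proof (rule eventually_mono)
    fix x assume x: "a < x \<and> x < lam 1"
    have "F x = (\<Sum>j\<in>{i..0}. c j * B k j x) / (x - a) ^ nat (i + int k)"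
      unfolding F_def sum_divide_distrib
    proof (intro sum.cong refl)
      fix j assume j: "j \<in> {i..0}"
      then have "nat (j + int k) = nat (i + int k) + nat (j - i)" using i by auto
      then show "c j * (B k j x / (x - a) ^ nat (j + int k)) * (x - a) ^ nat (j - i)
          = c j * B k j x / (x - a) ^ nat (i + int k)"
        using x by (simp add: power_add)
    qed
    also have "(\<Sum>j\<in>{i..0}. c j * B k j x) = (\<Sum>j\<in>{lo..int g}. c j * B k j x)"
      using sum_bspline_near_a[OF i _ prev] x by simp
    also have "\<dots> = 0" using S x knot_in_interval[of 1] by auto
    finally show "F x = 0" by simp
  qed
  then have "(F \<longlongrightarrow> 0) (at_right a)" by (rule tendsto_eventually)
  with lim have "c i * L i = 0" by (intro tendsto_unique[of "at_right a" F]) auto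
  then show ?thesis using L[of i] i by auto
qed

lemma bspline_coeff_zero_inside:
  assumes S: "\<forall>x\<in>{a..b}. (\<Sum>j\<in>{lo..int g}. c j * B k j x) = 0"
    and i: "0 < i" "i \<le> int g" and prev: "\<And>j. lo \<le> j \<Longrightarrow> j < i \<Longrightarrow> c j = 0"
  shows "c i = 0"
proof -
  define x where "x = (lam i + lam (i + 1)) / 2"
  have "lam i < lam (i + 1)" using i by (intro knot_strict_step) auto
  then have x: "lam i < x" "x < lam (i + 1)" unfolding x_def by auto
  have xab: "x \<in> {a..b}" using x knot_in_interval[of i] knot_in_interval[of "i + 1"] i by auto
  have "c j * B k j x = (if j = i then c i * B k i x else 0)" if j: "j \<in> {lo..int g}" for j
  proof -
    consider "j < i" | "j = i" | "i < j" by linarith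
    then show ?thesis
    proof cases
      case 3
      then have "lam (i + 1) \<le> lam j" using j i by (intro knot_mono) auto
      then show ?thesis using 3 x j by (simp add: bspline_zero_left)
    qed (use prev j in auto)
  qed
  then have "(\<Sum>j\<in>{lo..int g}. c j * B k j x) = (\<Sum>j\<in>{lo..int g}. if j = i then c i * B k i x else 0)"
    by (intro sum.cong) auto
  also have "\<dots> = c i * B k i x" using i by (subst sum.delta) auto
  finally have "c i * B k i x = 0" using S xab by simp
  moreover have "0 < B k i x" using i x by (intro bspline_pos[of i k i]) auto
  ultimately show ?thesis by simp
qed

lemma bspline_linear_independent:
  assumes S: "\<forall>x\<in>{a..b}. (\<Sum>j\<in>{lo..int g}. c j * B k j x) = 0"
  shows "\<forall>i\<in>{lo..int g}. c i = 0"
proof -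
  have "c i = 0" if "lo \<le> i" "i \<le> int g" for i
    using that
  proof (induction "nat (i - lo)" arbitrary: i rule: less_induct)
    case less
    then have prev: "\<And>j. lo \<le> j \<Longrightarrow> j < i \<Longrightarrow> c j = 0" by auto
    show ?case
      using bspline_coeff_zero_at_a[OF S _ _ prev] bspline_coeff_zero_inside[OF S _ _ prev] less.prems
      by (cases "i \<le> 0") auto
  qed
  then show ?thesis by auto
qed

end

section \<open>Derivative, continuity and integral of B-splines\<close>

lemma DERIV_weighted_sum:
  fixes F G :: "real \<Rightarrow> real"
  assumes "(F has_real_derivative F') (at x)" "(G has_real_derivative G') (at x)"
  shows "((\<lambda>y. (y - c1) / e1 * F y + (c2 - y) / e2 * G y) has_real_derivative
     (1 / e1 * F x + (x - c1) / e1 * F' + - 1 / e2 * G x + (c2 - x) / e2 * G')) (at x)"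
proof -
  have l1: "((\<lambda>y. (y - c1) / e1) has_real_derivative 1 / e1) (at x)"
  proof -
    have "((\<lambda>y. y - c1) has_real_derivative 1 - 0) (at x)" by (intro DERIV_diff DERIV_ident DERIV_const)
    from DERIV_cdivide[OF this, of e1] show ?thesis by simp
  qed
  have l2: "((\<lambda>y. (c2 - y) / e2) has_real_derivative - 1 / e2) (at x)"
  proof -
    have "((\<lambda>y. c2 - y) has_real_derivative 0 - 1) (at x)" by (intro DERIV_diff DERIV_ident DERIV_const)
    from DERIV_cdivide[OF this, of e2] show ?thesis by simp
  qed
  show ?thesis by (rule DERIV_cong[OF DERIV_add[OF DERIV_mult[OF l1 assms(1)] DERIV_mult[OF l2 assms(2)]]]) (simp add: algebra_simps)
qed

lemma bspline_0_has_derivative: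
  assumes "x \<noteq> lam j" "x \<noteq> lam (j+1)" "x \<noteq> b"
  shows "(bspline lam b 0 j has_real_derivative 0) (at x)"
proof -
  define d where "d = min \<bar>x - lam j\<bar> (min \<bar>x - lam (j+1)\<bar> \<bar>x - b\<bar>)"
  have d: "d > 0" using assms unfolding d_def by auto
  have "eventually (\<lambda>y. bspline lam b 0 j x = bspline lam b 0 j y) (nhds x)"
    unfolding eventually_nhds_metric
  proof (intro exI[of _ d] conjI allI impI d)
    fix y assume "dist y x < d"
    then have h: "\<bar>y - x\<bar> < d" by (simp add: dist_real_def)
    have "(lam j \<le> y) = (lam j \<le> x)" "(y < lam (j+1)) = (x < lam (j+1))" "y \<noteq> b"
      using h unfolding d_def by auto
    then show "bspline lam b 0 j x = bspline lam b 0 j y" using assms by simp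
  qed
  then have "((\<lambda>y. bspline lam b 0 j x) has_real_derivative 0) (at x) \<longleftrightarrow> (bspline lam b 0 j has_real_derivative 0) (at x)"
    by (intro DERIV_cong_ev) auto
  then show ?thesis by simp
qed

text \<open>Differentiating the Cox--de Boor recursion for B^{p+2} by the product rule and inserting
  Z^p for the derivatives of the degree-p splines gives Z^{p+1}; here n = p + 1. The degenerate
  case t1 = tp2 relies on x / 0 = 0.\<close>

lemma derivative_recursion_identity:
  fixes t0 t1 t2 tp1 tp2 tp3 x B0 B1 B2 n :: real
  assumes "t0 \<le> t1" "t1 \<le> tp2" "tp2 \<le> tp3"
  shows "1 / (tp2 - t0) * ((x - t0) / (tp1 - t0) * B0 + (tp2 - x) / (tp2 - t1) * B1)
     + (x - t0) / (tp2 - t0) * (n * (B0 / (tp1 - t0) - B1 / (tp2 - t1)))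
     + (-1 / (tp3 - t1)) * ((x - t1) / (tp2 - t1) * B1 + (tp3 - x) / (tp3 - t2) * B2)
     + (tp3 - x) / (tp3 - t1) * (n * (B1 / (tp2 - t1) - B2 / (tp3 - t2)))
   = (n + 1) * (((x - t0) / (tp1 - t0) * B0 + (tp2 - x) / (tp2 - t1) * B1) / (tp2 - t0)
              - ((x - t1) / (tp2 - t1) * B1 + (tp3 - x) / (tp3 - t2) * B2) / (tp3 - t1))"
    (is "?L = ?R")
proof -
  have "?L - ?R = n * B1 * inverse (tp2 - t1)
      * ((tp3 - t1) * inverse (tp3 - t1) - (tp2 - t0) * inverse (tp2 - t0))"
    unfolding divide_inverse by algebra
  also have "\<dots> = 0"
  proof (cases "tp2 = t1")
    case False
    then have "tp2 - t0 \<noteq> 0" "tp3 - t1 \<noteq> 0" using assms by auto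
    then show ?thesis by simp
  qed simp
  finally show ?thesis by simp
qed

context extended_knots
begin

lemma has_real_derivative_bspline_Suc: "lo \<le> i \<Longrightarrow> i + int p + 2 \<le> hi \<Longrightarrow> x \<notin> lam ` {lo..hi} \<Longrightarrow> x \<noteq> b \<Longrightarrow>
  (B (Suc p) i has_real_derivative zbspline lam b p i x) (at x)"
proof (induction p arbitrary: i)
  case 0
  have ne: "x \<noteq> lam i" "x \<noteq> lam (i+1)" "x \<noteq> lam (i+1+1)" using 0 by (auto simp: image_iff)
  have d0: "(B 0 i has_real_derivative 0) (at x)" using ne 0 by (intro bspline_0_has_derivative) auto
  have d1: "(B 0 (i+1) has_real_derivative 0) (at x)" using ne 0 by (intro bspline_0_has_derivative) auto
  have f: "B (Suc 0) i = (\<lambda>y. (y - lam i) / (lam (i + int 0 + 1) - lam i) * B 0 i y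
     + (lam (i + int 0 + 2) - y) / (lam (i + int 0 + 2) - lam (i+1)) * B 0 (i+1) y)"
    by (rule ext) (rule bspline.simps(2))
  have "zbspline lam b 0 i x = 1 / (lam (i + int 0 + 1) - lam i) * B 0 i x + (x - lam i) / (lam (i + int 0 + 1) - lam i) * 0
     + - 1 / (lam (i + int 0 + 2) - lam (i+1)) * B 0 (i+1) x + (lam (i + int 0 + 2) - x) / (lam (i + int 0 + 2) - lam (i+1)) * 0"
    by (simp add: zbspline_def)
  then show ?case unfolding f by (simp only:) (rule DERIV_weighted_sum[OF d0 d1])
next
  case (Suc p)
  have d0: "(B (Suc p) i has_real_derivative zbspline lam b p i x) (at x)"
    using Suc by (intro Suc.IH) auto
  have d1: "(B (Suc p) (i+1) has_real_derivative zbspline lam b p (i+1) x) (at x)"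
    using Suc by (intro Suc.IH) auto
  have f: "B (Suc (Suc p)) i = (\<lambda>y. (y - lam i) / (lam (i + int (Suc p) + 1) - lam i) * B (Suc p) i y
     + (lam (i + int (Suc p) + 2) - y) / (lam (i + int (Suc p) + 2) - lam (i+1)) * B (Suc p) (i+1) y)"
    by (rule ext) (rule bspline.simps(2))
  have eqs: "i + int (Suc p) + 1 = i + int p + 2" "i + int (Suc p) + 2 = i + int p + 3"
    "i + 1 + int p + 1 = i + int p + 2" "i + 1 + int p + 2 = i + int p + 3" "i + 1 + 1 = i + 2"
    "real (Suc p + 1) = real (p + 1) + 1" by simp_all
  have m: "lam i \<le> lam (i+1)" "lam (i+1) \<le> lam (i + int p + 2)" "lam (i + int p + 2) \<le> lam (i + int p + 3)"
    using Suc.prems by (auto intro!: knot_mono)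
  have "zbspline lam b (Suc p) i x = 1 / (lam (i + int (Suc p) + 1) - lam i) * B (Suc p) i x
     + (x - lam i) / (lam (i + int (Suc p) + 1) - lam i) * zbspline lam b p i x
     + - 1 / (lam (i + int (Suc p) + 2) - lam (i+1)) * B (Suc p) (i+1) x
     + (lam (i + int (Suc p) + 2) - x) / (lam (i + int (Suc p) + 2) - lam (i+1)) * zbspline lam b p (i+1) x"
    unfolding zbspline_def bspline.simps(2) eqs by (rule derivative_recursion_identity[OF m, symmetric])
  then show ?case unfolding f by (simp only:) (rule DERIV_weighted_sum[OF d0 d1])
qed


end

lemma hat_function_eq:
  fixes t0 t1 t2 y :: real
  assumes t: "t0 < t1" "t1 < t2" and P: "y < t2 \<Longrightarrow> P" "P \<Longrightarrow> y \<le> t2"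
  shows "(y - t0) / (t1 - t0) * (if t0 \<le> y \<and> y < t1 then 1 else 0)
      + (t2 - y) / (t2 - t1) * (if t1 \<le> y \<and> P then 1 else 0)
    = max 0 (min ((y - t0) / (t1 - t0)) ((t2 - y) / (t2 - t1)))"
proof -
  consider "y < t0" | "t0 \<le> y" "y < t1" | "t1 \<le> y" "y < t2" | "t2 \<le> y" by linarith
  then show ?thesis
  proof cases
    case 1
    then have "(y - t0) / (t1 - t0) < 0" using t by (simp add: divide_neg_pos)
    with 1 t show ?thesis by auto
  next
    case 2
    then have u: "0 \<le> (y - t0) / (t1 - t0)" "(y - t0) / (t1 - t0) \<le> 1" and v: "1 \<le> (t2 - y) / (t2 - t1)"
      using t by (simp_all add: field_simps)
    then have "min ((y - t0) / (t1 - t0)) ((t2 - y) / (t2 - t1)) = (y - t0) / (t1 - t0)"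
      by (intro min.absorb1) linarith
    with 2 u show ?thesis by auto
  next
    case 3
    then have u: "1 \<le> (y - t0) / (t1 - t0)" and v: "0 \<le> (t2 - y) / (t2 - t1)" "(t2 - y) / (t2 - t1) \<le> 1"
      using t by (simp_all add: field_simps)
    then have "min ((y - t0) / (t1 - t0)) ((t2 - y) / (t2 - t1)) = (t2 - y) / (t2 - t1)"
      by (intro min.absorb2) linarith
    with 3 t P v show ?thesis by auto
  next
    case 4
    then have "(t2 - y) / (t2 - t1) \<le> 0" using t by (simp add: divide_nonpos_pos)
    with 4 t P show ?thesis by (cases "y = t2") auto
  qed
qed

context extended_knots
begin

lemma bspline_1_eq:
  "B (Suc 0) i y = (y - lam i) / (lam (i + 1) - lam i) * B 0 i y
    + (lam (i + 2) - y) / (lam (i + 2) - lam (i + 1)) * B 0 (i + 1) y"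
  by (simp add: add.assoc)

lemma bspline_1_hat:
  assumes i: "lo \<le> i" "i + 2 \<le> hi" and t: "lam i < lam (i + 1)" "lam (i + 1) < lam (i + 2)"
    and y: "y \<in> {a..b}"
  shows "B (Suc 0) i y = max 0 (min ((y - lam i) / (lam (i + 1) - lam i))
    ((lam (i + 2) - y) / (lam (i + 2) - lam (i + 1))))"
proof -
  have "lam (i + 2) \<le> b" using i knot_in_interval[of "i + 2"] by simp
  then have B0: "B 0 i y = (if lam i \<le> y \<and> y < lam (i + 1) then 1 else 0)"
    "B 0 (i + 1) y = (if lam (i + 1) \<le> y \<and> (y < lam (i + 2) \<or> y = b \<and> lam (i + 2) = b) then 1 else 0)"
    using t by (auto simp: add.assoc)
  then show ?thesis
    unfolding bspline_1_eq B0 by (intro hat_function_eq) (use t y in auto)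
qed

lemma bspline_1_ramp_up:
  assumes i: "lo \<le> i" "i + 2 \<le> hi" and t: "lam i < lam (i + 1)" "lam (i + 1) = lam (i + 2)"
    and y: "y \<in> {a..b}"
  shows "B (Suc 0) i y = max 0 ((y - lam i) / (lam (i + 1) - lam i))"
proof -
  have "lam (i + 1) = a \<or> lam (i + 1) = b"
    using equal_knots_at_ends[of "i + 1"] i t by (simp add: add.assoc)
  then have "lam (i + 1) = b" using t knot_in_interval[of i] i by auto
  then have "B 0 i y = (if lam i \<le> y then 1 else 0)" using t y by auto
  moreover have "0 \<le> (y - lam i) / (lam (i + 1) - lam i) \<longleftrightarrow> lam i \<le> y" using t by (simp add: zero_le_divide_iff)
  ultimately show ?thesis unfolding bspline_1_eq using t by auto
qed

lemma bspline_1_ramp_down: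
  assumes i: "lo \<le> i" "i + 2 \<le> hi" and t: "lam i = lam (i + 1)" "lam (i + 1) < lam (i + 2)"
    and y: "y \<in> {a..b}"
  shows "B (Suc 0) i y = max 0 ((lam (i + 2) - y) / (lam (i + 2) - lam (i + 1)))"
proof -
  have "lam i = a \<or> lam i = b" using equal_knots_at_ends[of i] i t by simp
  then have "lam (i + 1) = a" using t knot_in_interval[of "i + 2"] i by auto
  moreover have "lam (i + 2) \<le> b" using knot_in_interval[of "i + 2"] i by simp
  ultimately have "B 0 (i + 1) y = (if y < lam (i + 2) \<or> y = b \<and> lam (i + 2) = b then 1 else 0)"
    using t y by (auto simp: add.assoc)
  moreover have "0 \<le> (lam (i + 2) - y) / (lam (i + 2) - lam (i + 1)) \<longleftrightarrow> y \<le> lam (i + 2)"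
    using t by (simp add: zero_le_divide_iff)
  ultimately show ?thesis unfolding bspline_1_eq using t y by auto
qed

lemma continuous_on_bspline_1:
  assumes i: "lo \<le> i" "i + 2 \<le> hi"
  shows "continuous_on {a..b} (B (Suc 0) i)"
proof -
  have "lam i \<le> lam (i + 1)" "lam (i + 1) \<le> lam (i + 2)" using i by (auto intro!: knot_mono)
  then consider "lam i < lam (i + 1)" "lam (i + 1) < lam (i + 2)"
    | "lam i < lam (i + 1)" "lam (i + 1) = lam (i + 2)"
    | "lam i = lam (i + 1)" "lam (i + 1) < lam (i + 2)"
    | "lam i = lam (i + 1)" "lam (i + 1) = lam (i + 2)"
    by fastforce
  then show ?thesis
  proof cases
    case 1
    then show ?thesis using bspline_1_hat[OF i 1]
      by (subst continuous_on_cong[OF refl]) (auto simp: divide_inverse intro!: continuous_intros)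
  next
    case 2
    then show ?thesis using bspline_1_ramp_up[OF i 2]
      by (subst continuous_on_cong[OF refl]) (auto simp: divide_inverse intro!: continuous_intros)
  next
    case 3
    then show ?thesis using bspline_1_ramp_down[OF i 3]
      by (subst continuous_on_cong[OF refl]) (auto simp: divide_inverse intro!: continuous_intros)
  next
    case 4
    then have "B (Suc 0) i = (\<lambda>_. 0)" by (auto simp: bspline_1_eq)
    then show ?thesis by simp
  qed
qed

lemma continuous_on_bspline_Suc: "lo \<le> i \<Longrightarrow> i + int p + 2 \<le> hi \<Longrightarrow> continuous_on {a..b} (B (Suc p) i)"
proof (induction p arbitrary: i)
  case 0 then show ?case using continuous_on_bspline_1 by simp
next
  case (Suc p)
  have c0: "continuous_on {a..b} (B (Suc p) i)" using Suc by (intro Suc.IH) auto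
  have c1: "continuous_on {a..b} (B (Suc p) (i+1))" using Suc by (intro Suc.IH) auto
  have f: "B (Suc (Suc p)) i = (\<lambda>y. (y - lam i) / (lam (i + int (Suc p) + 1) - lam i) * B (Suc p) i y
     + (lam (i + int (Suc p) + 2) - y) / (lam (i + int (Suc p) + 2) - lam (i+1)) * B (Suc p) (i+1) y)"
    by (rule ext) (rule bspline.simps(2))
  show ?case unfolding f divide_inverse by (intro continuous_intros c0 c1)
qed


lemma bspline_at_b: "lo \<le> i \<Longrightarrow> i \<le> int g - 1 \<Longrightarrow> i + int p + 1 \<le> hi \<Longrightarrow> B p i b = 0"
proof (induction p arbitrary: i)
  case 0
  have "lam (i + 1) \<le> lam (int g)" using 0 by (intro knot_mono) auto
  moreover have "lam (int g) < b" using knot_strict_step[of "int g"] knot_right[of "int g + 1"] by simp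
  ultimately show ?case by simp
next
  case (Suc p)
  have "(lam (i + int p + 2) - b) * B p (i + 1) b = 0"
  proof (cases "i + 1 \<le> int g - 1")
    case True
    then show ?thesis using Suc by (simp add: Suc.IH)
  next
    case False
    then have "lam (i + int p + 2) = b" using Suc.prems by (intro knot_right) auto
    then show ?thesis by simp
  qed
  then show ?case using Suc by simp
qed

lemma bspline_at_left_knot:
  "lo \<le> i \<Longrightarrow> i + int p + 1 \<le> hi \<Longrightarrow> x \<le> lam i \<Longrightarrow> lam i < lam (i + int p) \<Longrightarrow> B p i x = 0"
proof (induction p arbitrary: i)
  case (Suc p)
  have "(x - lam i) * B p i x = 0"
    using Suc.prems bspline_zero_left[of i p x] by (cases "x < lam i") auto
  moreover have "B p (i + 1) x = 0"
  proof (cases "x < lam (i + 1)")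
    case True
    then show ?thesis using Suc.prems by (intro bspline_zero_left) auto
  next
    case False
    moreover have "lam i \<le> lam (i + 1)" using Suc.prems by (intro knot_mono) auto
    ultimately have eq: "lam (i + 1) = lam i" "x = lam i" using Suc.prems by auto
    have e: "i + int (Suc p) = i + 1 + int p" by simp
    have "lam (i + 1) < lam (i + 1 + int p)" using Suc.prems(4) eq unfolding e by simp
    then show ?thesis using Suc.prems eq by (intro Suc.IH) auto
  qed
  ultimately show ?case by simp
qed simp

lemma has_integral_zbspline:
  assumes i: "lo \<le> i" "i \<le> int g - 1"
  shows "(zbspline lam b k i has_integral 0) {a..b}"
proof -
  have "(zbspline lam b k i has_integral (B (Suc k) i b - B (Suc k) i a)) {a..b}"
  proof (rule fundamental_theorem_of_calculus_interior_strong[of "lam ` {lo..hi}"])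
    show "continuous_on {a..b} (B (Suc k) i)" using i by (intro continuous_on_bspline_Suc) auto
    fix x assume "x \<in> {a<..<b} - lam ` {lo..hi}"
    then have "(B (Suc k) i has_real_derivative zbspline lam b k i x) (at x)"
      using i by (intro has_real_derivative_bspline_Suc) auto
    then show "(B (Suc k) i has_vector_derivative zbspline lam b k i x) (at x)"
      by (simp add: has_real_derivative_iff_has_vector_derivative)
  qed (use a_less_b in auto)
  moreover have "B (Suc k) i b = 0" using i by (intro bspline_at_b) auto
  moreover have "B (Suc k) i a = 0"
  proof (rule bspline_at_left_knot)
    have e: "i + int (Suc k) = i + int k + 1" by simp
    show "lam i < lam (i + int (Suc k))" unfolding e using support_length_pos[of i] i by simp
  qed (use i knot_in_interval[of i] in auto)
  ultimately show ?thesis by simp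
qed

end

section \<open>The span of the constants and the ZB-splines\<close>

lemma bspline_borel_measurable: "bspline lam b p i \<in> borel_measurable borel"
proof (induction p arbitrary: i)
  case 0
  show ?case by simp measurable
next
  case (Suc p)
  show ?case using Suc.IH[of i] Suc.IH[of "i + 1"] by simp measurable
qed

lemma zbspline_borel_measurable: "zbspline lam b k i \<in> borel_measurable borel"
  unfolding zbspline_def
  using bspline_borel_measurable[of lam b k i] bspline_borel_measurable[of lam b k "i + 1"]
  by measurable

context extended_knots
begin

abbreviation "J \<equiv> {lo..int g - 1}"

definition in_zb_span :: "(real \<Rightarrow> real) \<Rightarrow> bool" where
  "in_zb_span f \<longleftrightarrow> (\<exists>\<alpha> \<beta>. \<forall>x\<in>{a..b}. f x = \<alpha> + (\<Sum>j\<in>J. \<beta> j * zbspline lam b k j x))"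

lemma in_zb_span_const: "in_zb_span (\<lambda>x. r)"
  unfolding in_zb_span_def by (intro exI[of _ r] exI[of _ "\<lambda>_. 0"]) simp

lemma in_zb_span_zbspline: "j \<in> J \<Longrightarrow> in_zb_span (zbspline lam b k j)"
proof -
  assume j: "j \<in> J"
  have "(\<Sum>j'\<in>J. (if j' = j then 1 else 0) * zbspline lam b k j' x)
      = (\<Sum>j'\<in>J. if j' = j then zbspline lam b k j' x else 0)" for x
    by (intro sum.cong) auto
  also have "\<dots> x = zbspline lam b k j x" for x using j by (subst sum.delta) auto
  finally have "(\<Sum>j'\<in>J. (if j' = j then 1 else 0) * zbspline lam b k j' x) = zbspline lam b k j x" for x .
  then show ?thesis unfolding in_zb_span_def
    by (intro exI[of _ 0] exI[of _ "\<lambda>j'. if j' = j then 1 else 0"]) simp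
qed

lemma in_zb_span_add: "in_zb_span f \<Longrightarrow> in_zb_span h \<Longrightarrow> in_zb_span (\<lambda>x. f x + h x)"
proof -
  assume "in_zb_span f" "in_zb_span h"
  then obtain a1 b1 a2 b2 where "\<forall>x\<in>{a..b}. f x = a1 + (\<Sum>j\<in>J. b1 j * zbspline lam b k j x)"
    "\<forall>x\<in>{a..b}. h x = a2 + (\<Sum>j\<in>J. b2 j * zbspline lam b k j x)"
    unfolding in_zb_span_def by blast
  then show ?thesis unfolding in_zb_span_def
    by (intro exI[of _ "a1 + a2"] exI[of _ "\<lambda>j. b1 j + b2 j"]) (simp add: distrib_right sum.distrib)
qed

lemma in_zb_span_scale: "in_zb_span f \<Longrightarrow> in_zb_span (\<lambda>x. r * f x)"
proof -
  assume "in_zb_span f"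
  then obtain a1 b1 where "\<forall>x\<in>{a..b}. f x = a1 + (\<Sum>j\<in>J. b1 j * zbspline lam b k j x)"
    unfolding in_zb_span_def by blast
  then show ?thesis unfolding in_zb_span_def
    by (intro exI[of _ "r * a1"] exI[of _ "\<lambda>j. r * b1 j"])
      (simp add: distrib_left sum_distrib_left mult.assoc)
qed

lemma in_zb_span_cong: "in_zb_span f \<Longrightarrow> (\<And>x. x \<in> {a..b} \<Longrightarrow> f x = h x) \<Longrightarrow> in_zb_span h"
  unfolding in_zb_span_def by metis

lemma in_zb_span_sum: "finite S \<Longrightarrow> (\<And>i. i \<in> S \<Longrightarrow> in_zb_span (f i)) \<Longrightarrow> in_zb_span (\<lambda>x. \<Sum>i\<in>S. f i x)"
proof (induction S rule: finite_induct)
  case empty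
  then show ?case using in_zb_span_const[of 0] by simp
next
  case (insert i S)
  then have "in_zb_span (\<lambda>x. f i x + (\<Sum>i\<in>S. f i x))" by (intro in_zb_span_add) auto
  then show ?case using insert by simp
qed

text \<open>The M-spline of Curry and Schoenberg, the multiple of B_i with integral 1.\<close>

definition mspline :: "int \<Rightarrow> real \<Rightarrow> real" where
  "mspline i x = real (k + 1) * B k i x / (lam (i + int k + 1) - lam i)"

lemma zbspline_eq_mspline_diff: "zbspline lam b k j x = mspline j x - mspline (j + 1) x"
proof -
  have e: "j + 1 + int k + 1 = j + int k + 2" by simp
  show ?thesis unfolding zbspline_def mspline_def e by (simp add: right_diff_distrib)
qed

lemma bspline_eq_scaled_mspline: "i \<in> {lo..int g} \<Longrightarrow> B k i x = (lam (i + int k + 1) - lam i) / real (k + 1) * mspline i x"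
  using support_length_pos[of i] unfolding mspline_def by simp

lemma in_zb_span_mspline_diff: "i \<in> {lo..int g} \<Longrightarrow> in_zb_span (\<lambda>x. mspline i x - mspline (int g) x)"
proof -
  assume i: "i \<in> {lo..int g}"
  have "in_zb_span (\<lambda>x. \<Sum>j\<in>{i..int g - 1}. zbspline lam b k j x)"
    using i by (intro in_zb_span_sum in_zb_span_zbspline) auto
  moreover have "(\<Sum>j\<in>{i..int g - 1}. zbspline lam b k j x) = mspline i x - mspline (int g) x" for x
    unfolding zbspline_eq_mspline_diff using i by (subst sum_int_Icc_telescope) auto
  ultimately show ?thesis by simp
qed

text \<open>By the partition of unity, 1 = \<Sum>_i c_i (M_i - M_g) + (\<Sum>_i c_i) M_g with all c_i > 0, which
  puts M_g, and hence every M_i, into the span.\<close>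

lemma in_zb_span_bspline: "i \<in> {lo..int g} \<Longrightarrow> in_zb_span (B k i)"
proof -
  assume i: "i \<in> {lo..int g}"
  define c where "c j = (lam (j + int k + 1) - lam j) / real (k + 1)" for j
  define C where "C = (\<Sum>j\<in>{lo..int g}. c j)"
  have "0 < C" unfolding C_def c_def using support_length_pos by (intro sum_pos) auto
  have Bc: "B k j x = c j * mspline j x" if "j \<in> {lo..int g}" for j x
    unfolding c_def using bspline_eq_scaled_mspline[OF that] .
  have "in_zb_span (\<lambda>x. 1 / C * 1 + (- 1 / C) * (\<Sum>j\<in>{lo..int g}. c j * (mspline j x - mspline (int g) x)))"
    by (intro in_zb_span_add in_zb_span_scale in_zb_span_const in_zb_span_sum in_zb_span_mspline_diff) auto
  moreover have "1 / C * 1 + (- 1 / C) * (\<Sum>j\<in>{lo..int g}. c j * (mspline j x - mspline (int g) x))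
      = mspline (int g) x" if x: "x \<in> {a..b}" for x
  proof -
    have "1 = (\<Sum>j\<in>{lo..int g}. B k j x)" using bspline_partition_of_unity[of k x] x by simp
    also have "\<dots> = (\<Sum>j\<in>{lo..int g}. c j * (mspline j x - mspline (int g) x)) + C * mspline (int g) x"
      unfolding C_def sum_distrib_right sum.distrib[symmetric]
      by (intro sum.cong refl) (simp add: Bc algebra_simps)
    finally show ?thesis using \<open>0 < C\<close> by (simp add: field_simps)
  qed
  ultimately have "in_zb_span (mspline (int g))" by (rule in_zb_span_cong)
  then have "in_zb_span (\<lambda>x. c i * ((mspline i x - mspline (int g) x) + mspline (int g) x))"
    using i by (intro in_zb_span_scale in_zb_span_add in_zb_span_mspline_diff)
  then show ?thesis by (rule in_zb_span_cong) (simp add: Bc[OF i])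
qed

lemma zb_constant_term_zero:
  assumes "\<forall>x\<in>{a..b}. \<alpha> + (\<Sum>j\<in>J. \<beta> j * zbspline lam b k j x) = 0"
  shows "\<alpha> = 0"
proof -
  have "((\<lambda>x. \<alpha>) has_integral (b - a) * \<alpha>) {a..b}"
    using has_integral_const_real[of \<alpha> a b] a_less_b by simp
  then have "((\<lambda>x. \<alpha> + (\<Sum>j\<in>J. \<beta> j * zbspline lam b k j x)) has_integral
      ((b - a) * \<alpha> + (\<Sum>j\<in>J. \<beta> j * 0))) {a..b}"
    by (intro has_integral_add has_integral_sum has_integral_mult_right has_integral_zbspline) auto
  then have "((\<lambda>x. 0) has_integral ((b - a) * \<alpha> + (\<Sum>j\<in>J. \<beta> j * 0))) {a..b}"
    by (rule has_integral_eq[rotated]) (use assms in auto)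
  then have "(b - a) * \<alpha> + (\<Sum>j\<in>J. \<beta> j * 0) = 0"
    using has_integral_0 has_integral_unique by blast
  then show ?thesis using a_less_b by simp
qed

end

context extended_knots
begin

lemma zb_combination_eq_mspline_combination:
  assumes "\<And>i. i \<notin> J \<Longrightarrow> \<beta> i = 0"
  shows "(\<Sum>j\<in>J. \<beta> j * zbspline lam b k j x) = (\<Sum>i\<in>{lo..int g}. (\<beta> i - \<beta> (i - 1)) * mspline i x)"
proof -
  have "(\<Sum>j\<in>J. \<beta> j * zbspline lam b k j x)
      = (\<Sum>j\<in>J. \<beta> j * mspline j x) - (\<Sum>j\<in>J. \<beta> (j + 1 - 1) * mspline (j + 1) x)"
    unfolding zbspline_eq_mspline_diff by (simp add: sum_subtractf right_diff_distrib)
  also have "(\<Sum>j\<in>J. \<beta> j * mspline j x) = (\<Sum>i\<in>{lo..int g - 1 + 1}. \<beta> i * mspline i x)"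
    using assms[of "int g"] by (subst sum_int_Icc_last) auto
  also have "(\<Sum>j\<in>J. \<beta> (j + 1 - 1) * mspline (j + 1) x) = (\<Sum>i\<in>{lo + 1..int g - 1 + 1}. \<beta> (i - 1) * mspline i x)"
    by (rule sum_int_Icc_shift)
  also have "\<dots> = (\<Sum>i\<in>{lo..int g - 1 + 1}. \<beta> (i - 1) * mspline i x)"
    using assms[of "lo - 1"] by (subst sum_int_Icc_first[of lo]) auto
  finally show ?thesis by (simp add: sum_subtractf left_diff_distrib)
qed

lemma zb_coeffs_zero:
  assumes zero: "\<forall>x\<in>{a..b}. \<alpha> + (\<Sum>j\<in>J. \<beta> j * zbspline lam b k j x) = 0"
  shows "\<alpha> = 0 \<and> (\<forall>j\<in>J. \<beta> j = 0)"
proof -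
  have "\<alpha> = 0" using zb_constant_term_zero[OF zero] .
  define \<beta>' where "\<beta>' i = (if i \<in> J then \<beta> i else 0)" for i
  have "\<forall>x\<in>{a..b}. (\<Sum>i\<in>{lo..int g}. ((\<beta>' i - \<beta>' (i - 1)) * real (k + 1) / (lam (i + int k + 1) - lam i)) * B k i x) = 0"
  proof
    fix x assume "x \<in> {a..b}"
    then have "0 = (\<Sum>j\<in>J. \<beta>' j * zbspline lam b k j x)" using zero \<open>\<alpha> = 0\<close> by (simp add: \<beta>'_def)
    also have "\<dots> = (\<Sum>i\<in>{lo..int g}. (\<beta>' i - \<beta>' (i - 1)) * mspline i x)"
      by (rule zb_combination_eq_mspline_combination) (auto simp: \<beta>'_def)
    finally show "(\<Sum>i\<in>{lo..int g}. ((\<beta>' i - \<beta>' (i - 1)) * real (k + 1) / (lam (i + int k + 1) - lam i)) * B k i x) = 0"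
      unfolding mspline_def by (simp add: mult.assoc)
  qed
  from bspline_linear_independent[OF this]
  have shift: "\<beta>' i = \<beta>' (i - 1)" if "i \<in> {lo..int g}" for i
    using that support_length_pos[of i] by auto
  have "\<beta>' i = 0" if "lo - 1 \<le> i" "i \<le> int g" for i
    using that
  proof (induction i rule: int_ge_induct)
    case base then show ?case by (simp add: \<beta>'_def)
  next
    case (step i) then show ?case using shift[of "i + 1"] by simp
  qed
  note all_zero = this
  have "\<beta> j = 0" if j: "j \<in> J" for j
  proof -
    have "\<beta>' j = 0" using j by (intro all_zero) auto
    then show ?thesis using j by (simp add: \<beta>'_def)
  qed
  then show ?thesis using \<open>\<alpha> = 0\<close> by blast
qed

lemma zbspline_bounded:
  assumes j: "j \<in> J"
  shows "\<forall>x\<in>{a..b}. \<bar>zbspline lam b k j x\<bar> \<le> real (k + 1) * (1 / (lam (j + int k + 1) - lam j)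
    + 1 / (lam (j + int k + 2) - lam (j + 1)))"
proof
  fix x assume x: "x \<in> {a..b}"
  define l1 where "l1 = lam (j + int k + 1) - lam j"
  define l2 where "l2 = lam (j + int k + 2) - lam (j + 1)"
  have e: "j + 1 + int k + 1 = j + int k + 2" by simp
  have "0 < l1" "0 < l2"
    using support_length_pos[of j] support_length_pos[of "j + 1"] j unfolding l1_def l2_def e by auto
  then have "0 \<le> B k j x / l1" "B k j x / l1 \<le> 1 / l1" "0 \<le> B k (j + 1) x / l2" "B k (j + 1) x / l2 \<le> 1 / l2"
    using bspline_nonneg[of j k x] bspline_nonneg[of "j + 1" k x]
      bspline_le_1[of j x] bspline_le_1[of "j + 1" x] j x
    by (auto intro!: divide_right_mono)
  then have "\<bar>B k j x / l1 - B k (j + 1) x / l2\<bar> \<le> 1 / l1 + 1 / l2" by linarith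
  then show "\<bar>zbspline lam b k j x\<bar> \<le> real (k + 1) * (1 / l1 + 1 / l2)"
    unfolding zbspline_def l1_def[symmetric] l2_def[symmetric] by (simp add: abs_mult mult_left_mono)
qed

end

section \<open>Bivariate ZB-spline expansions\<close>

definition zb_expansion ::
  "(int \<Rightarrow> real) \<Rightarrow> real \<Rightarrow> nat \<Rightarrow> nat \<Rightarrow> (int \<Rightarrow> real) \<Rightarrow> real \<Rightarrow> nat \<Rightarrow> nat
    \<Rightarrow> (int \<times> int \<Rightarrow> real) \<Rightarrow> (int \<Rightarrow> real) \<Rightarrow> (int \<Rightarrow> real) \<Rightarrow> real \<Rightarrow> real \<Rightarrow> real" where
  "zb_expansion lam b g k mu d h l z v u x y =
     (\<Sum>i\<in>{- int k..int g - 1}. \<Sum>j\<in>{- int l..int h - 1}.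
        z (i, j) * (zbspline lam b k i x * zbspline mu d l j y))
     + (\<Sum>i\<in>{- int k..int g - 1}. v i * zbspline lam b k i x)
     + (\<Sum>j\<in>{- int l..int h - 1}. u j * zbspline mu d l j y)"

context extended_knots
begin

lemma bspline_zb_coeffs:
  "\<exists>\<alpha> \<beta>. \<forall>i\<in>{lo..int g}. \<forall>x\<in>{a..b}. B k i x = \<alpha> i + (\<Sum>p\<in>J. \<beta> i p * zbspline lam b k p x)"
proof -
  have "\<forall>i\<in>{lo..int g}. \<exists>c. \<forall>x\<in>{a..b}. B k i x = fst c + (\<Sum>p\<in>J. snd c p * zbspline lam b k p x)"
    using in_zb_span_bspline unfolding in_zb_span_def by fastforce
  then obtain c where "\<forall>i\<in>{lo..int g}. \<forall>x\<in>{a..b}. B k i x = fst (c i) + (\<Sum>p\<in>J. snd (c i) p * zbspline lam b k p x)"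
    by metis
  then show ?thesis by (intro exI[of _ "\<lambda>i. fst (c i)"] exI[of _ "\<lambda>i. snd (c i)"])
qed

end

lemma spline_zb_expansion:
  assumes X: "extended_knots a b g k lam" and Y: "extended_knots c d h l mu"
    and s: "s \<in> spline_space a b c d g h k l lam mu"
  shows "\<exists>C z v u. \<forall>x\<in>{a..b}. \<forall>y\<in>{c..d}. s x y = C + zb_expansion lam b g k mu d h l z v u x y"
proof -
  interpret X: extended_knots a b g k lam by fact
  interpret Y: extended_knots c d h l mu by fact
  obtain coef where coef: "\<forall>x\<in>{a..b}. \<forall>y\<in>{c..d}. s x y = (\<Sum>i\<in>{- int k..int g}. \<Sum>j\<in>{- int l..int h}.
      coef i j * (bspline lam b k i x * bspline mu d l j y))"
    using s unfolding spline_space_def by (auto simp: mult.assoc)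
  obtain \<alpha> \<beta> where X_coeffs: "\<forall>i\<in>{- int k..int g}. \<forall>x\<in>{a..b}.
      bspline lam b k i x = \<alpha> i + (\<Sum>p\<in>X.J. \<beta> i p * zbspline lam b k p x)"
    using X.bspline_zb_coeffs by blast
  obtain \<alpha>' \<beta>' where Y_coeffs: "\<forall>j\<in>{- int l..int h}. \<forall>y\<in>{c..d}.
      bspline mu d l j y = \<alpha>' j + (\<Sum>q\<in>Y.J. \<beta>' j q * zbspline mu d l q y)"
    using Y.bspline_zb_coeffs by blast
  define C where "C = (\<Sum>i\<in>{- int k..int g}. \<Sum>j\<in>{- int l..int h}. coef i j * \<alpha> i * \<alpha>' j)"
  define v where "v p = (\<Sum>i\<in>{- int k..int g}. \<Sum>j\<in>{- int l..int h}. coef i j * \<alpha>' j * \<beta> i p)" for p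
  define u where "u q = (\<Sum>i\<in>{- int k..int g}. \<Sum>j\<in>{- int l..int h}. coef i j * \<alpha> i * \<beta>' j q)" for q
  define z where "z pq = (\<Sum>i\<in>{- int k..int g}. \<Sum>j\<in>{- int l..int h}.
      coef i j * \<beta> i (fst pq) * \<beta>' j (snd pq))" for pq
  have "s x y = C + zb_expansion lam b g k mu d h l z v u x y" if "x \<in> {a..b}" "y \<in> {c..d}" for x y
  proof -
    have "s x y = (\<Sum>i\<in>{- int k..int g}. \<Sum>j\<in>{- int l..int h}. coef i j *
        ((\<alpha> i + (\<Sum>p\<in>X.J. \<beta> i p * zbspline lam b k p x)) * (\<alpha>' j + (\<Sum>q\<in>Y.J. \<beta>' j q * zbspline mu d l q y))))"
      using coef X_coeffs Y_coeffs that by simp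
    also have "\<dots> = C + zb_expansion lam b g k mu d h l z v u x y"
      unfolding sum_tensor_expansion zb_expansion_def C_def v_def u_def z_def by simp
    finally show ?thesis .
  qed
  then show ?thesis by blast
qed

text \<open>Only the constant contributes, since every ZB-spline has integral zero.\<close>

lemma has_integral_zb_expansion:
  assumes X: "extended_knots a b g k lam" and Y: "extended_knots c d h l mu"
  shows "((\<lambda>p. C + zb_expansion lam b g k mu d h l z v u (fst p) (snd p))
    has_integral C * ((b - a) * (d - c))) (cbox (a, c) (b, d))"
proof -
  interpret X: extended_knots a b g k lam by fact
  interpret Y: extended_knots c d h l mu by fact
  have one_x: "\<forall>x\<in>{a..b}. \<bar>1 :: real\<bar> \<le> 1" "((\<lambda>_. 1 :: real) has_integral (b - a)) {a..b}"
    and one_y: "\<forall>y\<in>{c..d}. \<bar>1 :: real\<bar> \<le> 1" "((\<lambda>_. 1 :: real) has_integral (d - c)) {c..d}"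
    using X.a_less_b Y.a_less_b has_integral_const_real[of "1::real" a b]
      has_integral_const_real[of "1::real" c d] by auto
  have "((\<lambda>p. C * (1 * 1) + (\<Sum>i\<in>X.J. \<Sum>j\<in>Y.J. z (i, j) * (zbspline lam b k i (fst p) * zbspline mu d l j (snd p)))
      + (\<Sum>i\<in>X.J. v i * (zbspline lam b k i (fst p) * 1)) + (\<Sum>j\<in>Y.J. u j * (1 * zbspline mu d l j (snd p))))
    has_integral C * ((b - a) * (d - c)) + (\<Sum>i\<in>X.J. \<Sum>j\<in>Y.J. z (i, j) * (0 * 0))
      + (\<Sum>i\<in>X.J. v i * (0 * (d - c))) + (\<Sum>j\<in>Y.J. u j * ((b - a) * 0))) (cbox (a, c) (b, d))"
    by (intro has_integral_add has_integral_sum has_integral_mult_right finite_atLeastAtMost_int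
        has_integral_tensor_product[OF _ _ one_x(1) one_y(1)]
        has_integral_tensor_product[OF _ _ X.zbspline_bounded Y.zbspline_bounded]
        has_integral_tensor_product[OF _ _ X.zbspline_bounded one_y(1)]
        has_integral_tensor_product[OF _ _ one_x(1) Y.zbspline_bounded]
        one_x(2) one_y(2) X.has_integral_zbspline Y.has_integral_zbspline
        zbspline_borel_measurable borel_measurable_const)
      auto
  then show ?thesis by (simp add: zb_expansion_def add.assoc)
qed


lemma zb_expansion_unique:
  assumes X: "extended_knots a b g k lam" and Y: "extended_knots c d h l mu"
    and eq: "\<forall>x\<in>{a..b}. \<forall>y\<in>{c..d}.
      zb_expansion lam b g k mu d h l z1 v1 u1 x y = zb_expansion lam b g k mu d h l z2 v2 u2 x y"
  shows "(\<forall>i\<in>{- int k..int g - 1}. \<forall>j\<in>{- int l..int h - 1}. z1 (i, j) = z2 (i, j))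
    \<and> (\<forall>i\<in>{- int k..int g - 1}. v1 i = v2 i) \<and> (\<forall>j\<in>{- int l..int h - 1}. u1 j = u2 j)"
proof -
  interpret X: extended_knots a b g k lam by fact
  interpret Y: extended_knots c d h l mu by fact
  define \<alpha> where "\<alpha> y = (\<Sum>j\<in>Y.J. (u1 j - u2 j) * zbspline mu d l j y)" for y
  define \<beta> where "\<beta> y i = (v1 i - v2 i) + (\<Sum>j\<in>Y.J. (z1 (i, j) - z2 (i, j)) * zbspline mu d l j y)" for y i
  have "\<alpha> y + (\<Sum>i\<in>X.J. \<beta> y i * zbspline lam b k i x)
      = zb_expansion lam b g k mu d h l z1 v1 u1 x y - zb_expansion lam b g k mu d h l z2 v2 u2 x y" for x y
    unfolding \<alpha>_def \<beta>_def zb_expansion_def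
    by (simp add: algebra_simps sum_subtractf sum.distrib sum_distrib_left sum_distrib_right)
  then have x_coeffs: "\<alpha> y = 0 \<and> (\<forall>i\<in>X.J. \<beta> y i = 0)" if "y \<in> {c..d}" for y
    using eq that by (intro X.zb_coeffs_zero) auto
  have "\<forall>y\<in>{c..d}. 0 + (\<Sum>j\<in>Y.J. (u1 j - u2 j) * zbspline mu d l j y) = 0"
    using x_coeffs unfolding \<alpha>_def by simp
  from Y.zb_coeffs_zero[OF this] have "\<forall>j\<in>Y.J. u1 j = u2 j" by simp
  moreover have "v1 i = v2 i \<and> (\<forall>j\<in>Y.J. z1 (i, j) = z2 (i, j))" if i: "i \<in> X.J" for i
  proof -
    have "\<forall>y\<in>{c..d}. (v1 i - v2 i) + (\<Sum>j\<in>Y.J. (z1 (i, j) - z2 (i, j)) * zbspline mu d l j y) = 0"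
      using x_coeffs i unfolding \<beta>_def by auto
    from Y.zb_coeffs_zero[OF this] show ?thesis by simp
  qed
  ultimately show ?thesis by auto
qed

lemma zb_expansion_restrict:
  "zb_expansion lam b g k mu d h l (restrict z ({- int k..int g - 1} \<times> {- int l..int h - 1}))
     (restrict v {- int k..int g - 1}) (restrict u {- int l..int h - 1})
   = zb_expansion lam b g k mu d h l z v u"
  unfolding zb_expansion_def by (intro ext sum.cong refl arg_cong2[where f = "(+)"]) auto

lemma ex1_zb_coefficients:
  assumes X: "extended_knots a b g k lam" and Y: "extended_knots c d h l mu"
    and rep: "\<forall>x\<in>{a..b}. \<forall>y\<in>{c..d}. s x y = zb_expansion lam b g k mu d h l z v u x y"
  shows "\<exists>!(z, v, u).
     z \<in> ({- int k..int g - 1} \<times> {- int l..int h - 1}) \<rightarrow>\<^sub>E (UNIV :: real set) \<and>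
     v \<in> {- int k..int g - 1} \<rightarrow>\<^sub>E (UNIV :: real set) \<and>
     u \<in> {- int l..int h - 1} \<rightarrow>\<^sub>E (UNIV :: real set) \<and>
     (\<forall>x\<in>{a..b}. \<forall>y\<in>{c..d}. s x y = zb_expansion lam b g k mu d h l z v u x y)"
proof -
  define Dz Dv Du where "Dz = {- int k..int g - 1} \<times> {- int l..int h - 1}"
    and "Dv = {- int k..int g - 1}" and "Du = {- int l..int h - 1}"
  let ?P = "\<lambda>(z, v, u). z \<in> Dz \<rightarrow>\<^sub>E (UNIV :: real set) \<and> v \<in> Dv \<rightarrow>\<^sub>E (UNIV :: real set)
    \<and> u \<in> Du \<rightarrow>\<^sub>E (UNIV :: real set)
    \<and> (\<forall>x\<in>{a..b}. \<forall>y\<in>{c..d}. s x y = zb_expansion lam b g k mu d h l z v u x y)"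
  have "\<exists>!t. ?P t"
  proof (rule ex1I)
    show "?P (restrict z Dz, restrict v Dv, restrict u Du)"
      using rep unfolding Dz_def Dv_def Du_def by (simp add: zb_expansion_restrict)
  next
    fix t assume "?P t"
    moreover obtain z' v' u' where t: "t = (z', v', u')" by (cases t)
    ultimately have pie: "z' \<in> Dz \<rightarrow>\<^sub>E UNIV" "v' \<in> Dv \<rightarrow>\<^sub>E UNIV" "u' \<in> Du \<rightarrow>\<^sub>E UNIV"
      and "\<forall>x\<in>{a..b}. \<forall>y\<in>{c..d}. zb_expansion lam b g k mu d h l z' v' u' x y
        = zb_expansion lam b g k mu d h l z v u x y"
      using rep by auto
    note coeffs = zb_expansion_unique[OF X Y this(4), folded Dv_def Du_def]
    have "z' = restrict z Dz"
      by (rule PiE_ext[of _ Dz "\<lambda>_. UNIV"]) (use pie coeffs in \<open>auto simp: Dz_def Dv_def Du_def\<close>)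
    moreover have "v' = restrict v Dv" by (rule PiE_ext[of _ Dv "\<lambda>_. UNIV"]) (use pie coeffs in auto)
    moreover have "u' = restrict u Du" by (rule PiE_ext[of _ Du "\<lambda>_. UNIV"]) (use pie coeffs in auto)
    ultimately show "t = (restrict z Dz, restrict v Dv, restrict u Du)" using t by simp
  qed
  then show ?thesis unfolding Dz_def Dv_def Du_def by simp
qed

theorem corollary2:
  fixes a b c d :: real and g h k l :: nat and lam mu :: "int \<Rightarrow> real"
    and s :: "real \<Rightarrow> real \<Rightarrow> real"
  assumes "knot_seq a b g k lam" and "knot_seq c d h l mu"
    and "s \<in> zspline_space a b c d g h k l lam mu"
  shows "\<exists>!(z, v, u).
     z \<in> ({- int k..int g - 1} \<times> {- int l..int h - 1}) \<rightarrow>\<^sub>E (UNIV :: real set) \<and>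
     v \<in> {- int k..int g - 1} \<rightarrow>\<^sub>E (UNIV :: real set) \<and>
     u \<in> {- int l..int h - 1} \<rightarrow>\<^sub>E (UNIV :: real set) \<and>
     (\<forall>x\<in>{a..b}. \<forall>y\<in>{c..d}.
        s x y = (\<Sum>i\<in>{- int k..int g - 1}. \<Sum>j\<in>{- int l..int h - 1}.
                   z (i, j) * (zbspline lam b k i x * zbspline mu d l j y))
              + (\<Sum>i\<in>{- int k..int g - 1}. v i * zbspline lam b k i x)
              + (\<Sum>j\<in>{- int l..int h - 1}. u j * zbspline mu d l j y))"
proof -
  have X: "extended_knots a b g k lam" and Y: "extended_knots c d h l mu"
    using assms(1,2) by (simp_all add: extended_knots_def)
  obtain C z v u where rep: "\<forall>x\<in>{a..b}. \<forall>y\<in>{c..d}. s x y = C + zb_expansion lam b g k mu d h l z v u x y"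
    using spline_zb_expansion[OF X Y] assms(3) unfolding zspline_space_def by blast
  have "((\<lambda>(x, y). s x y) has_integral C * ((b - a) * (d - c))) (cbox (a, c) (b, d))"
    by (rule has_integral_eq[OF _ has_integral_zb_expansion[OF X Y]])
      (use rep in \<open>auto simp: cbox_Pair_iff\<close>)
  then have "C = 0"
    using assms(3) extended_knots.a_less_b[OF X] extended_knots.a_less_b[OF Y]
    by (auto simp: zspline_space_def integral_unique)
  then have "\<forall>x\<in>{a..b}. \<forall>y\<in>{c..d}. s x y = zb_expansion lam b g k mu d h l z v u x y"
    using rep by simp
  from ex1_zb_coefficients[OF X Y this] show ?thesis unfolding zb_expansion_def .
qed

end
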